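(* Let $f\in\mathbb{R}[x,y]$ be a polynomial of degree $n$ with homogeneous decomposition $f=\sum_{i=0}^n f_i$, and let $\mathrm{II}_f=f_{xx}dx^2+2f_{xy}\,dx\,dy+f_{yy}dy^2$. Let $\varrho:\mathbb{R}^3\setminus\{\omega=0\}\to\mathbb{R}^2$, $\varrho(u,v,\omega)=(u/\omega,v/\omega)$. Set $F(u,v,\omega)=\sum_{i=0}^n\omega^{n-i}f_i(u,v)$ and $A=-uF_{uu}-vF_{uv}$, $B=-uF_{uv}-vF_{vv}$, $S=u^2F_{uu}+2uvF_{uv}+v^2F_{vv}$ (all evaluated at $(u,v,\omega)$), and let $Q$ be the quadratic differential form on $\mathbb{R}^3$ $$Q=\omega^2F_{uu}\,du^2+2\omega^2F_{uv}\,du\,dv+\omega^2F_{vv}\,dv^2+2\omega A\,du\,d\omega+2\omega B\,dv\,d\omega+S\,d\omega^2 .$$ Then on $\mathbb{R}^3\setminus\{\omega=0\}$ one has $Q=\omega^{n+2}\varrho^*(\mathrm{II}_f)$. Consequently the restriction of $Q$ to the unit sphere $\mathbb{S}^2=\{u^2+v^2+\omega^2=1\}$ is an analytic quadratic differential form on $\mathbb{S}^2$ which, on each open hemisphere $\{\omega>0\}$ and $\{\omega<0\}$, is a nonvanishing multiple of the form induced from $\mathrm{II}_f$ by the Poincaré projections (so it extends these induced forms to the whole sphere), and the equator $\{\omega=0\}\cap\mathbb{S}^2$ is an integral curve of the fields of lines defined on $\mathbb{S}^2$ by this form.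
   Context: The Poincaré projections are $s_{1,2}:\mathbb{R}^2\to\mathbb{S}^2$, $s_{1}(x,y)=(x,y,1)/\sqrt{1+x^2+y^2}$, $s_2=-s_1$; their inverses on the open upper and lower hemispheres are the restrictions of $\varrho$. The induced forms are $(s_i^{-1})^*\mathrm{II}_f$ on the respective open hemispheres. The fields of lines defined by a quadratic differential form $Q$ on $\mathbb{S}^2$ assign to a point $p$ the directions $\xi\in T_p\mathbb{S}^2$ with $Q_p(\xi,\xi)=0$; the solutions of $\mathrm{II}_f=0$ in the plane are the (projected) fields of asymptotic directions of the graph of $f$. *)

theory Defs
  imports "HOL-Analysis.Analysis"
begin

text \<open>A real polynomial in two variables of degree at most n, given by its coefficients
  c i j (coefficient of x^i y^j); c i j is only used for i + j \<le> n.\<close>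
definition poly2 :: "(nat \<Rightarrow> nat \<Rightarrow> real) \<Rightarrow> nat \<Rightarrow> real \<Rightarrow> real \<Rightarrow> real" where
  "poly2 c n x y = (\<Sum>i\<le>n. \<Sum>j\<le>n - i. c i j * x ^ i * y ^ j)"

definition homc :: "(nat \<Rightarrow> nat \<Rightarrow> real) \<Rightarrow> nat \<Rightarrow> real \<Rightarrow> real \<Rightarrow> real" where
  "homc c k u v = (\<Sum>i\<le>k. c i (k - i) * u ^ i * v ^ (k - i))"

definition has_degree :: "(nat \<Rightarrow> nat \<Rightarrow> real) \<Rightarrow> nat \<Rightarrow> bool" where
  "has_degree c n \<longleftrightarrow> (\<exists>i j. i + j = n \<and> c i j \<noteq> 0)"

definition Fhom :: "(nat \<Rightarrow> nat \<Rightarrow> real) \<Rightarrow> nat \<Rightarrow> real \<Rightarrow> real \<Rightarrow> real \<Rightarrow> real" where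
  "Fhom c n u v w = (\<Sum>i\<le>n. w ^ (n - i) * homc c i u v)"

definition dxx :: "(real \<Rightarrow> real \<Rightarrow> real) \<Rightarrow> real \<Rightarrow> real \<Rightarrow> real" where
  "dxx g x y = deriv (\<lambda>x. deriv (\<lambda>x. g x y) x) x"
definition dxy :: "(real \<Rightarrow> real \<Rightarrow> real) \<Rightarrow> real \<Rightarrow> real \<Rightarrow> real" where
  "dxy g x y = deriv (\<lambda>y. deriv (\<lambda>x. g x y) x) y"
definition dyy :: "(real \<Rightarrow> real \<Rightarrow> real) \<Rightarrow> real \<Rightarrow> real \<Rightarrow> real" where
  "dyy g x y = deriv (\<lambda>y. deriv (\<lambda>y. g x y) y) y"

definition IIf :: "(real \<Rightarrow> real \<Rightarrow> real) \<Rightarrow> real \<times> real \<Rightarrow> real \<times> real \<Rightarrow> real" where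
  "IIf g p \<xi> = (case p of (x, y) \<Rightarrow> case \<xi> of (a, b) \<Rightarrow>
      dxx g x y * a\<^sup>2 + 2 * dxy g x y * a * b + dyy g x y * b\<^sup>2)"

definition Fuu :: "(nat \<Rightarrow> nat \<Rightarrow> real) \<Rightarrow> nat \<Rightarrow> real \<Rightarrow> real \<Rightarrow> real \<Rightarrow> real" where
  "Fuu c n u v w = dxx (\<lambda>u v. Fhom c n u v w) u v"
definition Fuv :: "(nat \<Rightarrow> nat \<Rightarrow> real) \<Rightarrow> nat \<Rightarrow> real \<Rightarrow> real \<Rightarrow> real \<Rightarrow> real" where
  "Fuv c n u v w = dxy (\<lambda>u v. Fhom c n u v w) u v"
definition Fvv :: "(nat \<Rightarrow> nat \<Rightarrow> real) \<Rightarrow> nat \<Rightarrow> real \<Rightarrow> real \<Rightarrow> real \<Rightarrow> real" where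
  "Fvv c n u v w = dyy (\<lambda>u v. Fhom c n u v w) u v"

definition Acoef :: "(nat \<Rightarrow> nat \<Rightarrow> real) \<Rightarrow> nat \<Rightarrow> real \<Rightarrow> real \<Rightarrow> real \<Rightarrow> real" where
  "Acoef c n u v w = - u * Fuu c n u v w - v * Fuv c n u v w"
definition Bcoef :: "(nat \<Rightarrow> nat \<Rightarrow> real) \<Rightarrow> nat \<Rightarrow> real \<Rightarrow> real \<Rightarrow> real \<Rightarrow> real" where
  "Bcoef c n u v w = - u * Fuv c n u v w - v * Fvv c n u v w"
definition Scoef :: "(nat \<Rightarrow> nat \<Rightarrow> real) \<Rightarrow> nat \<Rightarrow> real \<Rightarrow> real \<Rightarrow> real \<Rightarrow> real" where
  "Scoef c n u v w = u\<^sup>2 * Fuu c n u v w + 2 * u * v * Fuv c n u v w + v\<^sup>2 * Fvv c n u v w"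

definition Qform :: "(nat \<Rightarrow> nat \<Rightarrow> real) \<Rightarrow> nat \<Rightarrow> real \<times> real \<times> real \<Rightarrow> real \<times> real \<times> real \<Rightarrow> real" where
  "Qform c n p \<xi> = (case p of (u, v, w) \<Rightarrow> case \<xi> of (du, dv, dw) \<Rightarrow>
      w\<^sup>2 * Fuu c n u v w * du\<^sup>2 + 2 * w\<^sup>2 * Fuv c n u v w * du * dv + w\<^sup>2 * Fvv c n u v w * dv\<^sup>2
      + 2 * w * Acoef c n u v w * du * dw + 2 * w * Bcoef c n u v w * dv * dw
      + Scoef c n u v w * dw\<^sup>2)"

text \<open>The central projection rho(u,v,w) = (u/w, v/w); its restrictions to the open hemispheres
  are the inverses of the Poincare projections s_1, s_2.\<close>
definition rho :: "real \<times> real \<times> real \<Rightarrow> real \<times> real" where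
  "rho p = (case p of (u, v, w) \<Rightarrow> (u / w, v / w))"

definition sphere2 :: "(real \<times> real \<times> real) set" where
  "sphere2 = {(u, v, w). u\<^sup>2 + v\<^sup>2 + w\<^sup>2 = 1}"

definition tangent_S2 :: "real \<times> real \<times> real \<Rightarrow> real \<times> real \<times> real \<Rightarrow> bool" where
  "tangent_S2 p \<xi> = (case p of (u, v, w) \<Rightarrow> case \<xi> of (a, b, d) \<Rightarrow> u * a + v * b + w * d = 0)"

text \<open>Real polynomial function in three variables (implies real analyticity).\<close>
definition poly3_fun :: "(real \<Rightarrow> real \<Rightarrow> real \<Rightarrow> real) \<Rightarrow> bool" where
  "poly3_fun g \<longleftrightarrow> (\<exists>N (a :: nat \<Rightarrow> nat \<Rightarrow> nat \<Rightarrow> real). \<forall>u v w.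
      g u v w = (\<Sum>i\<le>N. \<Sum>j\<le>N. \<Sum>k\<le>N. a i j k * u ^ i * v ^ j * w ^ k))"

end

theory Submission
  imports Defs
begin

text \<open>
  With F the homogenization of f, every second partial of F in (u, v) is homogeneous of degree
  n - 2, so w^n F_uu(u/w, v/w, 1) = w^2 F_uu(u, v, w), and likewise for F_uv, F_vv; on the other
  hand f = F(., ., 1). The differential of \<rho> sends (a, b, d) to (a w - u d, b w - v d) / w^2, and
  Q is exactly the Hessian form of F in (u, v) evaluated on that vector (a w - u d, b w - v d).
  Together these give Q = w^(n+2) \<rho>^*(II_f). The coefficients of Q are polynomial because the
  partials of a polynomial are, and on the equator w = 0 the vector (-v, u, 0) is mapped to 0.
\<close>

text \<open>A polynomial in (u, v, w) given by an indexed family of monomials; unlike the dense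
  coefficient box of poly3_fun, this form is stable under differentiation and multiplication by
  monomials without re-indexing.\<close>

definition monsum ::
  "'s set \<Rightarrow> ('s \<Rightarrow> real) \<Rightarrow> ('s \<Rightarrow> nat) \<Rightarrow> ('s \<Rightarrow> nat) \<Rightarrow> ('s \<Rightarrow> nat) \<Rightarrow> real \<Rightarrow> real \<Rightarrow> real \<Rightarrow> real"
  where "monsum S a i j k u v w = (\<Sum>s\<in>S. a s * u ^ i s * v ^ j s * w ^ k s)"

lemma deriv_monsum_u:
  assumes "finite S"
  shows "deriv (\<lambda>u. monsum S a i j k u v w) = (\<lambda>u. monsum S (\<lambda>s. a s * i s) (\<lambda>s. i s - 1) j k u v w)"
proof
  fix u
  have "((\<lambda>u. monsum S a i j k u v w) has_real_derivative monsum S (\<lambda>s. a s * i s) (\<lambda>s. i s - 1) j k u v w) (at u)"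
    unfolding monsum_def using assms by (auto intro!: derivative_eq_intros sum.cong)
  then show "deriv (\<lambda>u. monsum S a i j k u v w) u = monsum S (\<lambda>s. a s * i s) (\<lambda>s. i s - 1) j k u v w"
    by (rule DERIV_imp_deriv)
qed

lemma deriv_monsum_v:
  assumes "finite S"
  shows "deriv (\<lambda>v. monsum S a i j k u v w) = (\<lambda>v. monsum S (\<lambda>s. a s * j s) i (\<lambda>s. j s - 1) k u v w)"
proof
  fix v
  have "((\<lambda>v. monsum S a i j k u v w) has_real_derivative monsum S (\<lambda>s. a s * j s) i (\<lambda>s. j s - 1) k u v w) (at v)"
    unfolding monsum_def using assms by (auto intro!: derivative_eq_intros sum.cong)
  then show "deriv (\<lambda>v. monsum S a i j k u v w) v = monsum S (\<lambda>s. a s * j s) i (\<lambda>s. j s - 1) k u v w"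
    by (rule DERIV_imp_deriv)
qed

lemma monsum_homogeneous:
  assumes "w \<noteq> 0" and "\<And>s. s \<in> S \<Longrightarrow> a s \<noteq> 0 \<Longrightarrow> i s + j s + k s + m = n"
  shows "w ^ n * monsum S a i j k (u / w) (v / w) 1 = w ^ m * monsum S a i j k u v w"
  unfolding monsum_def sum_distrib_left
proof (rule sum.cong)
  fix s assume "s \<in> S"
  show "w ^ n * (a s * (u / w) ^ i s * (v / w) ^ j s * 1 ^ k s) = w ^ m * (a s * u ^ i s * v ^ j s * w ^ k s)"
  proof (cases "a s = 0")
    case False
    then have "w ^ n = w ^ i s * w ^ j s * w ^ k s * w ^ m"
      using assms(2) \<open>s \<in> S\<close> by (metis power_add)
    then show ?thesis using assms(1) by (simp add: power_divide field_simps)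
  qed simp
qed simp

lemma monsum_Plus:
  assumes "finite S" "finite T"
  shows "monsum S a i j k u v w + monsum T b p q r u v w
       = monsum (S <+> T) (case_sum a b) (case_sum i p) (case_sum j q) (case_sum k r) u v w"
  using assms unfolding monsum_def by (simp add: sum.Plus comp_def)

lemma monsum_mult_monomial:
  "r * u ^ p * v ^ q * w ^ m * monsum S a i j k u v w
     = monsum S (\<lambda>s. r * a s) (\<lambda>s. i s + p) (\<lambda>s. j s + q) (\<lambda>s. k s + m) u v w"
  unfolding monsum_def sum_distrib_left by (intro sum.cong) (simp_all add: power_add)

lemma poly3_fun_monsum:
  assumes "finite S"
  shows "poly3_fun (monsum S a i j k)"
proof -
  define N where "N = Max ((\<lambda>s. max (i s) (max (j s) (k s))) ` S)"
  define B where "B = {..N} \<times> {..N} \<times> {..N}"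
  define e where "e s = (i s, j s, k s)" for s
  have "max (i s) (max (j s) (k s)) \<le> N" if "s \<in> S" for s
    unfolding N_def using assms that by (intro Max_ge) auto
  then have "e ` S \<subseteq> B"
    by (auto simp: B_def e_def)
  have "monsum S a i j k u v w
      = (\<Sum>(p, q, r)\<in>B. (\<Sum>s | s \<in> S \<and> e s = (p, q, r). a s) * u ^ p * v ^ q * w ^ r)" for u v w
  proof -
    have "monsum S a i j k u v w = (\<Sum>x\<in>B. \<Sum>s | s \<in> S \<and> e s = x. a s * u ^ i s * v ^ j s * w ^ k s)"
      unfolding monsum_def using \<open>e ` S \<subseteq> B\<close> assms by (simp add: B_def sum.group)
    also have "\<dots> = (\<Sum>(p, q, r)\<in>B. (\<Sum>s | s \<in> S \<and> e s = (p, q, r). a s) * u ^ p * v ^ q * w ^ r)"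
      by (intro sum.cong) (auto simp: e_def sum_distrib_right)
    finally show ?thesis .
  qed
  then show ?thesis
    unfolding poly3_fun_def by (intro exI[of _ N] exI[of _ "\<lambda>p q r. \<Sum>s | s \<in> S \<and> e s = (p, q, r). a s"])
       (simp add: B_def sum.cartesian_product)
qed

lemma poly3_fun_obtain_monsum:
  assumes "poly3_fun f"
  obtains S :: "(nat \<times> nat \<times> nat) set" and a i j k where "finite S" "f = monsum S a i j k"
proof -
  obtain N a where "\<And>u v w. f u v w = (\<Sum>i\<le>N. \<Sum>j\<le>N. \<Sum>k\<le>N. a i j k * u ^ i * v ^ j * w ^ k)"
    using assms unfolding poly3_fun_def by blast
  then have "f = monsum ({..N} \<times> {..N} \<times> {..N}) (\<lambda>(i, j, k). a i j k) fst (fst \<circ> snd) (snd \<circ> snd)"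
    by (simp add: fun_eq_iff monsum_def sum.cartesian_product split_def)
  then show thesis by (rule that[rotated]) simp
qed

lemma poly3_fun_add:
  assumes "poly3_fun f" "poly3_fun g"
  shows "poly3_fun (\<lambda>u v w. f u v w + g u v w)"
proof -
  obtain S :: "(nat \<times> nat \<times> nat) set" and a i j k where "finite S" "f = monsum S a i j k"
    by (rule poly3_fun_obtain_monsum[OF assms(1)])
  moreover obtain T :: "(nat \<times> nat \<times> nat) set" and b p q r where "finite T" "g = monsum T b p q r"
    by (rule poly3_fun_obtain_monsum[OF assms(2)])
  ultimately show ?thesis
    by (simp add: monsum_Plus poly3_fun_monsum)
qed

lemma poly3_fun_mult_monomial:
  assumes "poly3_fun f"
  shows "poly3_fun (\<lambda>u v w. r * u ^ p * v ^ q * w ^ m * f u v w)"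
proof -
  obtain S :: "(nat \<times> nat \<times> nat) set" and a i j k where "finite S" "f = monsum S a i j k"
    by (rule poly3_fun_obtain_monsum[OF assms])
  then show ?thesis
    by (simp add: monsum_mult_monomial poly3_fun_monsum)
qed

text \<open>The index (k, l) stands for the monomial u^l v^(k - l) of the homogeneous component f_k.\<close>

abbreviation hom_index :: "nat \<Rightarrow> (nat \<times> nat) set" where
  "hom_index n \<equiv> SIGMA k:{..n}. {..k}"

lemma Fhom_eq_monsum:
  "Fhom c n u v w = monsum (hom_index n) (\<lambda>(k, l). c l (k - l)) snd (\<lambda>(k, l). k - l) (\<lambda>(k, l). n - k) u v w"
  unfolding Fhom_def homc_def monsum_def
  by (simp add: sum.Sigma sum_distrib_left split_def algebra_simps)

text \<open>Truncated exponents such as l - 2 only occur together with a vanishing coefficient.\<close>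

lemma Fuu_eq_monsum:
  "Fuu c n u v w = monsum (hom_index n) (\<lambda>(k, l). c l (k - l) * l * (l - 1))
     (\<lambda>(k, l). l - 2) (\<lambda>(k, l). k - l) (\<lambda>(k, l). n - k) u v w"
  unfolding Fuu_def dxx_def Fhom_eq_monsum
  by (simp add: deriv_monsum_u) (simp add: monsum_def split_def numeral_2_eq_2)

lemma Fuv_eq_monsum:
  "Fuv c n u v w = monsum (hom_index n) (\<lambda>(k, l). c l (k - l) * l * (k - l))
     (\<lambda>(k, l). l - 1) (\<lambda>(k, l). k - l - 1) (\<lambda>(k, l). n - k) u v w"
  unfolding Fuv_def dxy_def Fhom_eq_monsum
  by (simp add: deriv_monsum_u deriv_monsum_v) (simp add: monsum_def split_def numeral_2_eq_2)

lemma Fvv_eq_monsum: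
  "Fvv c n u v w = monsum (hom_index n) (\<lambda>(k, l). c l (k - l) * (k - l) * (k - l - 1))
     snd (\<lambda>(k, l). k - l - 2) (\<lambda>(k, l). n - k) u v w"
  unfolding Fvv_def dyy_def Fhom_eq_monsum
  by (simp add: deriv_monsum_v) (simp add: monsum_def split_def numeral_2_eq_2)

lemma Fuu_homogeneous: "w \<noteq> 0 \<Longrightarrow> w ^ n * Fuu c n (u / w) (v / w) 1 = w\<^sup>2 * Fuu c n u v w"
  unfolding Fuu_eq_monsum by (rule monsum_homogeneous) auto

lemma Fuv_homogeneous: "w \<noteq> 0 \<Longrightarrow> w ^ n * Fuv c n (u / w) (v / w) 1 = w\<^sup>2 * Fuv c n u v w"
  unfolding Fuv_eq_monsum by (rule monsum_homogeneous) auto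

lemma Fvv_homogeneous: "w \<noteq> 0 \<Longrightarrow> w ^ n * Fvv c n (u / w) (v / w) 1 = w\<^sup>2 * Fvv c n u v w"
  unfolding Fvv_eq_monsum by (rule monsum_homogeneous) auto

lemma poly3_fun_Fuu: "poly3_fun (\<lambda>u v w. Fuu c n u v w)"
  unfolding Fuu_eq_monsum by (simp add: poly3_fun_monsum)

lemma poly3_fun_Fuv: "poly3_fun (\<lambda>u v w. Fuv c n u v w)"
  unfolding Fuv_eq_monsum by (simp add: poly3_fun_monsum)

lemma poly3_fun_Fvv: "poly3_fun (\<lambda>u v w. Fvv c n u v w)"
  unfolding Fvv_eq_monsum by (simp add: poly3_fun_monsum)

lemma poly2_eq_Fhom_at_1: "poly2 c n = (\<lambda>x y. Fhom c n x y 1)"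
proof (intro ext)
  fix x y
  have "poly2 c n x y = (\<Sum>(i, j)\<in>{(i, j). i + j \<le> n}. c i j * x ^ i * y ^ j)"
    unfolding poly2_def by (simp add: sum.Sigma Sigma_def) (rule sum.cong; auto)
  also have "\<dots> = (\<Sum>k\<le>n. \<Sum>i\<le>k. c i (k - i) * x ^ i * y ^ (k - i))"
    by (rule sum.triangle_reindex_eq)
  finally show "poly2 c n x y = Fhom c n x y 1"
    unfolding Fhom_def homc_def by simp
qed

lemma frechet_derivative_rho:
  assumes "w \<noteq> 0"
  shows "frechet_derivative rho (at (u, v, w)) (a, b, d) = ((a * w - u * d) / w\<^sup>2, (b * w - v * d) / w\<^sup>2)"
proof -
  have rho_eq: "rho = (\<lambda>p. (fst p / snd (snd p), fst (snd p) / snd (snd p)))"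
    by (auto simp: rho_def fun_eq_iff)
  have "(rho has_derivative
      (\<lambda>h. ((fst h * w - u * snd (snd h)) / w\<^sup>2, (fst (snd h) * w - v * snd (snd h)) / w\<^sup>2))) (at (u, v, w))"
    unfolding rho_eq using assms by (auto intro!: derivative_eq_intros simp: power2_eq_square)
  then show ?thesis
    by (simp add: frechet_derivative_at[symmetric])
qed

lemma Qform_eq_Hessian_form:
  "Qform c n (u, v, w) (a, b, d)
     = Fuu c n u v w * (a * w - u * d)\<^sup>2 + 2 * Fuv c n u v w * (a * w - u * d) * (b * w - v * d)
       + Fvv c n u v w * (b * w - v * d)\<^sup>2"
  unfolding Qform_def Acoef_def Bcoef_def Scoef_def by (simp add: algebra_simps power2_eq_square)

lemma Qform_eq_pullback_IIf:
  assumes w: "w \<noteq> 0"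
  shows "Qform c n (u, v, w) \<xi>
           = w ^ (n + 2) * IIf (poly2 c n) (rho (u, v, w)) (frechet_derivative rho (at (u, v, w)) \<xi>)"
proof -
  obtain a b d where \<xi>: "\<xi> = (a, b, d)" by (cases \<xi>)
  define X where "X = (a * w - u * d) / w\<^sup>2"
  define Y where "Y = (b * w - v * d) / w\<^sup>2"
  define P where "P = Fuu c n (u / w) (v / w) 1"
  define Q where "Q = Fuv c n (u / w) (v / w) 1"
  define R where "R = Fvv c n (u / w) (v / w) 1"
  have "w ^ (n + 2) * IIf (poly2 c n) (rho (u, v, w)) (frechet_derivative rho (at (u, v, w)) \<xi>)
      = w ^ (n + 2) * (P * X\<^sup>2 + 2 * Q * X * Y + R * Y\<^sup>2)"
    by (simp add: \<xi> frechet_derivative_rho[OF w] IIf_def rho_def X_def Y_def P_def Q_def R_def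
        poly2_eq_Fhom_at_1 Fuu_def Fuv_def Fvv_def)
  also have "\<dots> = (w ^ n * P) * (w\<^sup>2 * X)\<^sup>2 / w\<^sup>2 + 2 * (w ^ n * Q) * (w\<^sup>2 * X) * (w\<^sup>2 * Y) / w\<^sup>2
                  + (w ^ n * R) * (w\<^sup>2 * Y)\<^sup>2 / w\<^sup>2"
    using w by (simp add: field_simps power_add power2_eq_square)
  also have "\<dots> = Fuu c n u v w * (a * w - u * d)\<^sup>2 + 2 * Fuv c n u v w * (a * w - u * d) * (b * w - v * d)
                  + Fvv c n u v w * (b * w - v * d)\<^sup>2"
    using w by (simp add: P_def Q_def R_def X_def Y_def Fuu_homogeneous Fuv_homogeneous Fvv_homogeneous)
  finally show ?thesis
    by (simp add: \<xi> Qform_eq_Hessian_form)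
qed

theorem proposition1:
  fixes c :: "nat \<Rightarrow> nat \<Rightarrow> real" and n :: nat
  assumes "has_degree c n"
  shows "(\<forall>u v w \<xi>. w \<noteq> 0 \<longrightarrow>
            Qform c n (u, v, w) \<xi> =
              w ^ (n + 2) * IIf (poly2 c n) (rho (u, v, w)) (frechet_derivative rho (at (u, v, w)) \<xi>))
       \<and> poly3_fun (\<lambda>u v w. w\<^sup>2 * Fuu c n u v w)
       \<and> poly3_fun (\<lambda>u v w. w\<^sup>2 * Fuv c n u v w)
       \<and> poly3_fun (\<lambda>u v w. w\<^sup>2 * Fvv c n u v w)
       \<and> poly3_fun (\<lambda>u v w. w * Acoef c n u v w)
       \<and> poly3_fun (\<lambda>u v w. w * Bcoef c n u v w)
       \<and> poly3_fun (\<lambda>u v w. Scoef c n u v w)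
       \<and> (\<forall>u v w. (u, v, w) \<in> sphere2 \<and> w \<noteq> 0 \<longrightarrow>
            w ^ (n + 2) \<noteq> 0 \<and>
            (\<forall>\<xi>. tangent_S2 (u, v, w) \<xi> \<longrightarrow>
               Qform c n (u, v, w) \<xi> =
                 w ^ (n + 2) * IIf (poly2 c n) (rho (u, v, w)) (frechet_derivative rho (at (u, v, w)) \<xi>)))
       \<and> (\<forall>u v. (u, v, 0) \<in> sphere2 \<longrightarrow> Qform c n (u, v, 0) (- v, u, 0) = 0)"
proof (intro conjI allI impI)
  note monomial_multiple = poly3_fun_mult_monomial[where r = 1 and p = 0 and q = 0 and m = 2, simplified]
  show "poly3_fun (\<lambda>u v w. w\<^sup>2 * Fuu c n u v w)"
    using monomial_multiple[OF poly3_fun_Fuu] .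
  show "poly3_fun (\<lambda>u v w. w\<^sup>2 * Fuv c n u v w)"
    using monomial_multiple[OF poly3_fun_Fuv] .
  show "poly3_fun (\<lambda>u v w. w\<^sup>2 * Fvv c n u v w)"
    using monomial_multiple[OF poly3_fun_Fvv] .
  show "poly3_fun (\<lambda>u v w. w * Acoef c n u v w)"
    using poly3_fun_add[OF poly3_fun_mult_monomial[OF poly3_fun_Fuu, of "-1" 1 0 1]
                           poly3_fun_mult_monomial[OF poly3_fun_Fuv, of "-1" 0 1 1]]
    by (simp add: Acoef_def algebra_simps)
  show "poly3_fun (\<lambda>u v w. w * Bcoef c n u v w)"
    using poly3_fun_add[OF poly3_fun_mult_monomial[OF poly3_fun_Fuv, of "-1" 1 0 1]
                           poly3_fun_mult_monomial[OF poly3_fun_Fvv, of "-1" 0 1 1]]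
    by (simp add: Bcoef_def algebra_simps)
  show "poly3_fun (\<lambda>u v w. Scoef c n u v w)"
    using poly3_fun_add[OF poly3_fun_add[OF poly3_fun_mult_monomial[OF poly3_fun_Fuu, of 1 2 0 0]
                                            poly3_fun_mult_monomial[OF poly3_fun_Fuv, of 2 1 1 0]]
                           poly3_fun_mult_monomial[OF poly3_fun_Fvv, of 1 0 2 0]]
    by (simp add: Scoef_def algebra_simps)
next
  fix u v w :: real and \<xi> assume "w \<noteq> 0"
  then show "Qform c n (u, v, w) \<xi>
      = w ^ (n + 2) * IIf (poly2 c n) (rho (u, v, w)) (frechet_derivative rho (at (u, v, w)) \<xi>)"
    by (rule Qform_eq_pullback_IIf)
next
  fix u v w :: real and \<xi> assume "(u, v, w) \<in> sphere2 \<and> w \<noteq> 0"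
  then show "w ^ (n + 2) \<noteq> 0"
    and "Qform c n (u, v, w) \<xi>
      = w ^ (n + 2) * IIf (poly2 c n) (rho (u, v, w)) (frechet_derivative rho (at (u, v, w)) \<xi>)"
    by (simp_all add: Qform_eq_pullback_IIf)
next
  fix u v :: real
  show "Qform c n (u, v, 0) (- v, u, 0) = 0"
    by (simp add: Qform_eq_Hessian_form)
qed

end
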